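(* Let $n\geq 1$ and let $F:\mathbb C^n\to\mathbb C^n$ be a biholomorphic map. Then $F$ is affine (i.e. $F(z)=F(0)+DF(0)z$ for all $z$) if and only if the function $$z\mapsto \log\left(\frac{\|DF(0)^{-1}(F(z)-F(0))\|}{\|z\|}\right)$$ is pluriharmonic on $\mathbb C^n\setminus\{0\}$.
   Context: $\|\cdot\|$ is the standard Hermitian norm on $\mathbb C^n$. A real-valued $C^2$ function $g$ on an open subset of $\mathbb C^n$ is pluriharmonic if its Levi matrix $\big(\partial^2 g/\partial z_i\partial\bar z_j\big)$ vanishes identically. *)

theory Defs
  imports "HOL-Analysis.Analysis"
begin

definition complex_linear :: "(complex^'n \<Rightarrow> complex^'m) \<Rightarrow> bool" where
  "complex_linear L \<longleftrightarrow> linear L \<and> (\<forall>(c::complex) x. L (c *s x) = c *s L x)"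

definition holomorphic_vec_on :: "(complex^'n \<Rightarrow> complex^'m) \<Rightarrow> (complex^'n) set \<Rightarrow> bool" where
  "holomorphic_vec_on F S \<longleftrightarrow>
     (\<forall>z\<in>S. \<exists>L. (F has_derivative L) (at z) \<and> complex_linear L)"

definition biholomorphic :: "(complex^'n \<Rightarrow> complex^'n) \<Rightarrow> bool" where
  "biholomorphic F \<longleftrightarrow> bij F \<and> holomorphic_vec_on F UNIV \<and> holomorphic_vec_on (inv F) UNIV"

definition wirt_dz :: "'n \<Rightarrow> (complex^'n \<Rightarrow> complex) \<Rightarrow> complex^'n \<Rightarrow> complex" where
  "wirt_dz i f z = (frechet_derivative f (at z) (axis i 1)
                    - \<i> * frechet_derivative f (at z) (axis i \<i>)) / 2"

definition wirt_dzbar :: "'n \<Rightarrow> (complex^'n \<Rightarrow> complex) \<Rightarrow> complex^'n \<Rightarrow> complex" where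
  "wirt_dzbar i f z = (frechet_derivative f (at z) (axis i 1)
                    + \<i> * frechet_derivative f (at z) (axis i \<i>)) / 2"

definition levi_entry :: "(complex^'n \<Rightarrow> real) \<Rightarrow> complex^'n \<Rightarrow> 'n \<Rightarrow> 'n \<Rightarrow> complex" where
  "levi_entry g z i j = wirt_dz i (wirt_dzbar j (\<lambda>w. complex_of_real (g w))) z"

definition C2_on :: "(complex^'n) set \<Rightarrow> (complex^'n \<Rightarrow> real) \<Rightarrow> bool" where
  "C2_on U g \<longleftrightarrow>
     (\<forall>z\<in>U. g differentiable (at z)) \<and>
     (\<forall>v. \<forall>z\<in>U. (\<lambda>w. frechet_derivative g (at w) v) differentiable (at z)) \<and>
     (\<forall>v u. continuous_on U
        (\<lambda>z. frechet_derivative (\<lambda>w. frechet_derivative g (at w) v) (at z) u))"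

definition pluriharmonic_on :: "(complex^'n) set \<Rightarrow> (complex^'n \<Rightarrow> real) \<Rightarrow> bool" where
  "pluriharmonic_on U g \<longleftrightarrow> open U \<and> C2_on U g \<and>
     (\<forall>z\<in>U. \<forall>i j. levi_entry g z i j = 0)"

end

theory Submission
  imports Defs "HOL-Complex_Analysis.Conformal_Mappings"
begin

(* Normalize F to G = DF(0)^-1 (F - F(0)), so that G(0) = 0 and DG(0) = id, and restrict
  g(z) = ln (||G z|| / ||z||) to a complex line t |-> t v.  Pluriharmonicity makes the restriction
  harmonic, and since ln |t| is harmonic this says that ln ||gamma(t)|| is harmonic for the curve
  gamma(t) = G(t v).  Its Laplacian is, up to a positive factor, the Cauchy-Schwarz defect
  ||gamma'||^2 ||gamma||^2 - |<gamma', gamma>|^2, so gamma' is everywhere parallel to gamma.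
  A Wronskian argument then confines gamma to the line C v: gamma(t) = f(t) v with f entire,
  injective and proper, f(0) = 0 and f'(0) = 1.  Such an f is the identity, whence G(v) = v. *)

section \<open>Hermitian product on complex vectors\<close>

definition cinner :: "complex^'n \<Rightarrow> complex^'n \<Rightarrow> complex" where
  "cinner x y = (\<Sum>k\<in>UNIV. x$k * cnj (y$k))"

lemma cinner_self: "cinner x x = of_real ((norm x)\<^sup>2)"
proof -
  have "cinner x x = of_real (\<Sum>k\<in>UNIV. (cmod (x$k))\<^sup>2)"
    unfolding cinner_def by (simp only: complex_norm_square of_real_sum)
  then show ?thesis by (simp add: norm_vec_def L2_set_def sum_nonneg)
qed

lemma cinner_smult_left: "cinner (c *s x) y = c * cinner x y"
  by (simp add: cinner_def sum_distrib_left mult.assoc)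

lemma cinner_smult_right: "cinner x (c *s y) = cnj c * cinner x y"
  by (simp add: cinner_def sum_distrib_left mult_ac)

lemma cnj_cinner: "cnj (cinner x y) = cinner y x"
  by (simp add: cinner_def cnj_sum mult.commute)

lemma norm_smult_vec: "norm (c *s (x::complex^'n)) = cmod c * norm x"
proof -
  have "of_real ((norm (c *s x))\<^sup>2) = c * cnj c * of_real ((norm x)\<^sup>2)"
    by (simp only: cinner_self[symmetric] cinner_smult_left cinner_smult_right mult_ac)
  also have "\<dots> = of_real ((cmod c * norm x)\<^sup>2)"
    by (simp only: complex_norm_square[symmetric] power_mult_distrib of_real_mult)
  finally have "(norm (c *s x))\<^sup>2 = (cmod c * norm x)\<^sup>2"
    by (simp only: of_real_eq_iff)
  then show ?thesis by (simp add: power2_eq_imp_eq)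
qed

lemma cinner_lagrange_identity:
  "(\<Sum>k\<in>UNIV. \<Sum>l\<in>UNIV. of_real ((cmod (x$k * y$l - x$l * y$k))\<^sup>2))
     = 2 * (cinner x x * cinner y y - cinner y x * cinner x y)"
proof -
  have e: "of_real ((cmod (x$k * y$l - x$l * y$k))\<^sup>2) =
     x$k * cnj (x$k) * (y$l * cnj (y$l)) + x$l * cnj (x$l) * (y$k * cnj (y$k))
     - y$k * cnj (x$k) * (x$l * cnj (y$l)) - y$l * cnj (x$l) * (x$k * cnj (y$k))" for k l
    by (simp only: complex_norm_square) (simp add: algebra_simps)
  have swap: "(\<Sum>k\<in>UNIV. \<Sum>l\<in>UNIV. f l * h k) = (\<Sum>k\<in>UNIV. \<Sum>l\<in>UNIV. f k * h l)"
    for f h :: "'a \<Rightarrow> complex"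
    by (subst sum.swap) simp
  show ?thesis
    unfolding e sum_subtractf sum.distrib swap
    by (simp add: cinner_def sum_product)
qed

lemma cinner_cauchy_schwarz_defect_real:
  "cinner y y * cinner x x - cinner y x * cinner x y
     = of_real ((norm y)\<^sup>2 * (norm x)\<^sup>2 - (cmod (cinner y x))\<^sup>2)"
proof -
  have "cinner y x * cinner x y = of_real ((cmod (cinner y x))\<^sup>2)"
    by (simp only: complex_norm_square cnj_cinner)
  then show ?thesis by (simp add: cinner_self)
qed

lemma cinner_cauchy_schwarz_eq_imp_parallel:
  assumes "cinner x x * cinner y y = cinner y x * cinner x y"
  shows "x$k * y$l = x$l * y$k"
proof -
  have "of_real (\<Sum>k\<in>UNIV. \<Sum>l\<in>UNIV. (cmod (x$k * y$l - x$l * y$k))\<^sup>2)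
      = 2 * (cinner x x * cinner y y - cinner y x * cinner x y)"
    unfolding of_real_sum by (rule cinner_lagrange_identity)
  then have "(\<Sum>k\<in>UNIV. \<Sum>l\<in>UNIV. (cmod (x$k * y$l - x$l * y$k))\<^sup>2) = 0"
    by (simp only: assms diff_self mult_zero_right of_real_eq_0_iff)
  then have "(cmod (x$k * y$l - x$l * y$k))\<^sup>2 = 0"
    by (simp add: sum_nonneg_eq_0_iff sum_nonneg)
  then show ?thesis by simp
qed

section \<open>Holomorphic curves\<close>

lemma bounded_linear_smult_vec: "bounded_linear (\<lambda>r::complex. r *s (v::complex^'n))"
proof -
  have "linear (\<lambda>r::complex. r *s v)"
    by (rule linearI) (simp_all add: vec_eq_iff algebra_simps vector_scaleR_component)
  then show ?thesis by (simp add: linear_conv_bounded_linear)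
qed

lemma has_derivative_smult_vec: "((\<lambda>t. t *s v) has_derivative (\<lambda>r. r *s (v::complex^'n))) F"
  by (rule bounded_linear_imp_has_derivative[OF bounded_linear_smult_vec])

lemma compact_vimage_smult_vec:
  fixes v :: "complex^'n"
  assumes C: "compact C" and v: "v \<noteq> 0"
  shows "compact {t. t *s v \<in> C}"
proof -
  have "closed ((\<lambda>t. t *s v) -` C)"
    by (rule continuous_closed_vimage[OF compact_imp_closed[OF C]])
       (rule linear_continuous_at[OF bounded_linear_smult_vec])
  then have "closed {t. t *s v \<in> C}"
    by (simp add: vimage_def)
  moreover obtain B where B: "\<And>x. x \<in> C \<Longrightarrow> norm x \<le> B"
    using compact_imp_bounded[OF C] by (auto simp: bounded_iff)
  have "cmod t \<le> B / norm v" if "t *s v \<in> C" for t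
    using B[OF that] v by (simp add: norm_smult_vec field_simps)
  then have "bounded {t. t *s v \<in> C}"
    by (auto simp: bounded_iff)
  ultimately show ?thesis
    by (simp add: compact_eq_bounded_closed)
qed

lemma has_field_derivative_curve_nth:
  assumes "(\<gamma> has_derivative (\<lambda>r. r *s w)) (at t)"
  shows "((\<lambda>t. \<gamma> t $ k) has_field_derivative w $ k) (at t)"
proof -
  have "(\<lambda>r. r * w $ k) = (*) (w $ k)" by (auto simp: mult.commute)
  then show ?thesis
    using bounded_linear.has_derivative[OF bounded_linear_vec_nth assms, of k]
    by (simp add: has_field_derivative_def)
qed

lemma has_derivative_curve_of_components:
  fixes \<gamma> :: "complex \<Rightarrow> complex^'n"
  assumes "\<And>k. ((\<lambda>t. \<gamma> t $ k) has_field_derivative w $ k) (at t)"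
  shows "(\<gamma> has_derivative (\<lambda>r. r *s w)) (at t)"
proof -
  have decomp: "x = (\<Sum>k\<in>UNIV. (x $ k) *s axis k 1)" for x :: "complex^'n"
    by (simp add: vec_eq_iff axis_def if_distrib cong: if_cong)
  have "((\<lambda>t. \<Sum>k\<in>UNIV. (\<gamma> t $ k) *s axis k 1) has_derivative
          (\<lambda>r. \<Sum>k\<in>UNIV. (w $ k * r) *s axis k 1)) (at t)"
    by (intro has_derivative_sum bounded_linear.has_derivative[OF bounded_linear_smult_vec]
          assms[unfolded has_field_derivative_def])
  moreover have "(\<lambda>r. \<Sum>k\<in>UNIV. (w $ k * r) *s axis k 1) = (\<lambda>r. r *s w)"
    by (subst (2) decomp) (simp add: vec_eq_iff mult.commute)
  ultimately show ?thesis by (simp only: decomp[symmetric])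
qed

lemma holomorphic_curve_derivative:
  fixes \<gamma> \<gamma>' :: "complex \<Rightarrow> complex^'n"
  assumes \<gamma>: "\<And>t. (\<gamma> has_derivative (\<lambda>r. r *s \<gamma>' t)) (at t)"
  obtains \<gamma>'' where "\<And>t. (\<gamma>' has_derivative (\<lambda>r. r *s \<gamma>'' t)) (at t)"
proof -
  have hol: "(\<lambda>t. \<gamma>' t $ k) holomorphic_on UNIV" for k
  proof -
    have "((\<lambda>t. \<gamma> t $ k) has_field_derivative \<gamma>' t $ k) (at t)" for t
      by (rule has_field_derivative_curve_nth[OF \<gamma>])
    then have "(\<lambda>t. \<gamma> t $ k) holomorphic_on UNIV" and "deriv (\<lambda>t. \<gamma> t $ k) = (\<lambda>t. \<gamma>' t $ k)"
      by (auto simp: holomorphic_on_open DERIV_imp_deriv)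
    then show ?thesis by (metis holomorphic_deriv open_UNIV)
  qed
  have "((\<lambda>t. \<gamma>' t $ k) has_field_derivative (\<chi> k. deriv (\<lambda>t. \<gamma>' t $ k) t) $ k) (at t)" for k t
    unfolding vec_lambda_beta by (rule holomorphic_derivI[OF hol open_UNIV UNIV_I])
  then show ?thesis
    by (intro that[of "\<lambda>t. \<chi> k. deriv (\<lambda>t. \<gamma>' t $ k) t"] has_derivative_curve_of_components)
qed

lemma has_derivative_cinner:
  assumes "(x has_derivative (\<lambda>r. r *s x')) (at t)" "(y has_derivative (\<lambda>r. r *s y')) (at t)"
  shows "((\<lambda>t. cinner (x t) (y t)) has_derivative
           (\<lambda>r. r * cinner x' (y t) + cnj r * cinner (x t) y')) (at t)"
proof -
  have "((\<lambda>t. cinner (x t) (y t)) has_derivative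
         (\<lambda>r. \<Sum>k\<in>UNIV. x t $ k * cnj (y' $ k * r) + x' $ k * r * cnj (y t $ k))) (at t)"
    unfolding cinner_def
    by (intro has_derivative_sum has_derivative_mult has_derivative_cnj
          has_field_derivative_curve_nth[OF assms(1), unfolded has_field_derivative_def]
          has_field_derivative_curve_nth[OF assms(2), unfolded has_field_derivative_def])
  then show ?thesis
    by (simp add: cinner_def sum.distrib sum_distrib_left algebra_simps)
qed

lemma has_derivative_ln_norm_curve:
  assumes \<gamma>: "(\<gamma> has_derivative (\<lambda>r. r *s \<gamma>')) (at t)" and nz: "\<gamma> t \<noteq> 0"
  shows "((\<lambda>t. ln (norm (\<gamma> t))) has_derivative
           (\<lambda>r. Re (r * (cinner \<gamma>' (\<gamma> t) / cinner (\<gamma> t) (\<gamma> t))))) (at t)"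
proof -
  have ln_norm: "ln (norm x) = ln (Re (cinner x x)) / 2" for x :: "complex^'n"
    by (cases "x = 0") (simp_all add: cinner_self ln_realpow)
  have pos: "0 < Re (cinner (\<gamma> t) (\<gamma> t))"
    using nz by (simp add: cinner_self)
  have "((\<lambda>t. ln (Re (cinner (\<gamma> t) (\<gamma> t))) / 2) has_derivative
      (\<lambda>r. Re (r * cinner \<gamma>' (\<gamma> t) + cnj r * cinner (\<gamma> t) \<gamma>')
             * inverse (Re (cinner (\<gamma> t) (\<gamma> t))) / 2)) (at t)"
    by (intro bounded_linear.has_derivative[OF bounded_linear_divide] has_derivative_ln pos
          has_derivative_Re has_derivative_cinner \<gamma>)
  moreover have "Re (r * cinner \<gamma>' (\<gamma> t) + cnj r * cinner (\<gamma> t) \<gamma>')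
             * inverse (Re (cinner (\<gamma> t) (\<gamma> t))) / 2
      = Re (r * (cinner \<gamma>' (\<gamma> t) / cinner (\<gamma> t) (\<gamma> t)))" for r
  proof -
    have e: "Re (r * cinner \<gamma>' (\<gamma> t) + cnj r * cinner (\<gamma> t) \<gamma>') = 2 * Re (r * cinner \<gamma>' (\<gamma> t))"
      by (simp add: cnj_cinner[of "\<gamma> t", symmetric])
    show ?thesis
      unfolding e cinner_self times_divide_eq_right Re_divide_of_real Re_complex_of_real
      using nz by (simp add: field_simps)
  qed
  ultimately show ?thesis unfolding ln_norm by simp
qed

(* For a real-differentiable Q with derivative DQ, DQ 1 + i DQ i = 2 dQ/d(zbar).  The quotient
  below is d/dt ln ||gamma t||^2, so the right-hand side is half the Laplacian of ln ||gamma||^2. *)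
lemma log_derivative_curve_dbar:
  assumes \<gamma>: "(\<gamma> has_derivative (\<lambda>r. r *s \<gamma>' t)) (at t)"
    and \<gamma>': "(\<gamma>' has_derivative (\<lambda>r. r *s \<gamma>'' t)) (at t)"
    and nz: "\<gamma> t \<noteq> 0"
  obtains DQ where
    "((\<lambda>t. cinner (\<gamma>' t) (\<gamma> t) / cinner (\<gamma> t) (\<gamma> t)) has_derivative DQ) (at t)"
    "DQ 1 + \<i> * DQ \<i> = 2 * (cinner (\<gamma>' t) (\<gamma>' t) * cinner (\<gamma> t) (\<gamma> t)
        - cinner (\<gamma>' t) (\<gamma> t) * cinner (\<gamma> t) (\<gamma>' t)) / (cinner (\<gamma> t) (\<gamma> t))\<^sup>2"
proof -
  have N: "cinner (\<gamma> t) (\<gamma> t) \<noteq> 0"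
    using nz by (simp add: cinner_self)
  have dbar: "((1 * a + cnj 1 * m) * n - p * (1 * p + cnj 1 * p')) / (n * n)
      + \<i> * (((\<i> * a + cnj \<i> * m) * n - p * (\<i> * p + cnj \<i> * p')) / (n * n))
      = 2 * (m * n - p * p') / n\<^sup>2" for a m n p p' :: complex
    by (simp add: power2_eq_square divide_simps) (simp add: algebra_simps)
  show ?thesis
    by (rule that[OF has_derivative_divide'[OF has_derivative_cinner[OF \<gamma>' \<gamma>]
          has_derivative_cinner[OF \<gamma> \<gamma>] N]])
       (rule dbar)
qed

section \<open>Second derivatives and the Levi form\<close>

definition second_derivative ::
    "('a::real_normed_vector \<Rightarrow> 'b::real_normed_vector) \<Rightarrow> 'a \<Rightarrow> 'a \<Rightarrow> 'a \<Rightarrow> 'b"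
  where "second_derivative g z u w =
    frechet_derivative (\<lambda>y. frechet_derivative g (at y) w) (at z) u"

lemma C2_on_has_derivative:
  "C2_on U g \<Longrightarrow> z \<in> U \<Longrightarrow> (g has_derivative frechet_derivative g (at z)) (at z)"
  unfolding C2_on_def by (simp add: frechet_derivative_works)

lemma C2_on_has_second_derivative:
  "C2_on U g \<Longrightarrow> z \<in> U \<Longrightarrow>
    ((\<lambda>y. frechet_derivative g (at y) w) has_derivative (\<lambda>u. second_derivative g z u w)) (at z)"
  unfolding C2_on_def second_derivative_def by (simp add: frechet_derivative_works)

lemma C2_on_second_derivative_bilinear:
  assumes U: "open U" and C2: "C2_on U g" and z: "z \<in> U"
  shows "bilinear (second_derivative g z)"
proof -
  let ?A = "second_derivative g z" and ?Dg = "\<lambda>y. frechet_derivative g (at y)"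
  have D2: "((\<lambda>y. ?Dg y w) has_derivative (\<lambda>u. ?A u w)) (at z)" for w
    by (rule C2_on_has_second_derivative[OF C2 z])
  have lin: "linear (?Dg y)" if "y \<in> U" for y
    using C2_on_has_derivative[OF C2 that] has_derivative_linear by blast
  have add: "?A u (w1 + w2) = ?A u w1 + ?A u w2" for u w1 w2
  proof -
    have "((\<lambda>y. ?Dg y (w1 + w2)) has_derivative (\<lambda>u. ?A u w1 + ?A u w2)) (at z)"
      by (rule has_derivative_transform_within_open[OF has_derivative_add[OF D2 D2] U z])
         (simp add: linear_add[OF lin])
    then have "(\<lambda>u. ?A u (w1 + w2)) = (\<lambda>u. ?A u w1 + ?A u w2)"
      by (rule has_derivative_unique[OF D2])
    then show ?thesis by meson
  qed
  have scale: "?A u (c *\<^sub>R w) = c *\<^sub>R ?A u w" for u c w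
  proof -
    have "((\<lambda>y. ?Dg y (c *\<^sub>R w)) has_derivative (\<lambda>u. c *\<^sub>R ?A u w)) (at z)"
      by (rule has_derivative_transform_within_open[OF has_derivative_scaleR_right[OF D2] U z])
         (simp add: linear_scale[OF lin])
    then have "(\<lambda>u. ?A u (c *\<^sub>R w)) = (\<lambda>u. c *\<^sub>R ?A u w)"
      by (rule has_derivative_unique[OF D2])
    then show ?thesis by meson
  qed
  have "linear (?A u)" for u
    by (rule linearI) (simp_all add: add scale)
  moreover have "linear (\<lambda>u. ?A u w)" for w
    using D2 has_derivative_linear by blast
  ultimately show ?thesis unfolding bilinear_def by blast
qed

lemma levi_entry_C2_on:
  fixes g :: "complex^'n \<Rightarrow> real"
  assumes U: "open U" and C2: "C2_on U g" and z: "z \<in> U"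
  defines "A \<equiv> second_derivative g z"
  shows "4 * levi_entry g z i j =
    Complex (A (axis i 1) (axis j 1) + A (axis i \<i>) (axis j \<i>))
            (A (axis i 1) (axis j \<i>) - A (axis i \<i>) (axis j 1))"
proof -
  let ?Dg = "\<lambda>y. frechet_derivative g (at y)"
  have "frechet_derivative (\<lambda>w. complex_of_real (g w)) (at y) = (\<lambda>x. of_real (?Dg y x))"
    if "y \<in> U" for y
    by (rule frechet_derivative_at[symmetric,
          OF has_derivative_of_real[OF C2_on_has_derivative[OF C2 that]]])
  then have dzbar: "wirt_dzbar j (\<lambda>w. complex_of_real (g w)) y
      = (of_real (?Dg y (axis j 1)) + \<i> * of_real (?Dg y (axis j \<i>))) / 2" if "y \<in> U" for y
    using that by (simp add: wirt_dzbar_def)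
  have "((\<lambda>y. (of_real (?Dg y (axis j 1)) + \<i> * of_real (?Dg y (axis j \<i>))) / 2) has_derivative
      (\<lambda>u. (of_real (A u (axis j 1)) + \<i> * of_real (A u (axis j \<i>))) / 2)) (at z)"
    unfolding A_def
    by (rule derivative_eq_intros C2_on_has_second_derivative[OF C2 z] refl | simp)+
  then have "((wirt_dzbar j (\<lambda>w. complex_of_real (g w))) has_derivative
      (\<lambda>u. (of_real (A u (axis j 1)) + \<i> * of_real (A u (axis j \<i>))) / 2)) (at z)"
    by (rule has_derivative_transform_within_open[OF _ U z]) (simp add: dzbar)
  then have "frechet_derivative (wirt_dzbar j (\<lambda>w. complex_of_real (g w))) (at z) =
      (\<lambda>u. (of_real (A u (axis j 1)) + \<i> * of_real (A u (axis j \<i>))) / 2)"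
    by (rule frechet_derivative_at[symmetric])
  then show ?thesis
    unfolding levi_entry_def wirt_dz_def by (simp add: complex_eq_iff)
qed

lemma pluriharmonic_on_second_derivative_smult_i:
  fixes g :: "complex^'n \<Rightarrow> real"
  assumes ph: "pluriharmonic_on U g" and z: "z \<in> U"
  shows "second_derivative g z u w + second_derivative g z (\<i> *s u) (\<i> *s w) = 0"
proof -
  let ?A = "second_derivative g z"
  have U: "open U" and C2: "C2_on U g" and levi: "\<And>i j. levi_entry g z i j = 0"
    using ph z unfolding pluriharmonic_on_def by auto
  have A: "bilinear ?A"
    by (rule C2_on_second_derivative_bilinear[OF U C2 z])
  have J: "linear (\<lambda>u::complex^'n. \<i> *s u)"
    by (rule linearI) (simp_all add: vec_eq_iff vector_scaleR_component)
  define B where "B u w = ?A u w + ?A (\<i> *s u) (\<i> *s w)" for u w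
  have "linear (\<lambda>w. ?A u w + ?A (\<i> *s u) (\<i> *s w))" for u
    using A linear_compose[OF J, of "?A (\<i> *s u)"]
    unfolding bilinear_def o_def by (intro linear_compose_add) auto
  moreover have "linear (\<lambda>u. ?A u w + ?A (\<i> *s u) (\<i> *s w))" for w
    using A linear_compose[OF J, of "\<lambda>u. ?A u (\<i> *s w)"]
    unfolding bilinear_def o_def by (intro linear_compose_add) auto
  ultimately have "bilinear B"
    unfolding bilinear_def B_def by blast
  moreover have "bilinear (\<lambda>u w::complex^'n. 0::real)"
    by (simp add: bilinear_def linear_zero)
  \<comment> \<open>The vanishing of the Levi matrix says that B vanishes on the real basis.\<close>
  moreover have "B u w = 0" if uB: "u \<in> Basis" and wB: "w \<in> Basis" for u w
  proof -
    obtain i j where u: "u = axis i 1 \<or> u = axis i \<i>" and w: "w = axis j 1 \<or> w = axis j \<i>"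
      using uB wB by (auto simp: Basis_vec_def Basis_complex_def)
    have diag: "?A (axis i 1) (axis j 1) + ?A (axis i \<i>) (axis j \<i>) = 0"
      and sym: "?A (axis i 1) (axis j \<i>) = ?A (axis i \<i>) (axis j 1)"
      using levi_entry_C2_on[OF U C2 z, of i j] levi[of i j] by (simp_all add: complex_eq_iff)
    have J1: "\<i> *s axis k 1 = axis k \<i>" and Ji: "\<i> *s axis k \<i> = - axis k 1" for k :: 'n
      by (simp_all add: vec_eq_iff axis_def)
    show ?thesis
      using u w diag sym
      by (auto simp: B_def J1 Ji bilinear_lneg[OF A] bilinear_rneg[OF A])
  qed
  ultimately have "B u w = 0"
    using bilinear_eq[of B "\<lambda>u w. 0" UNIV Basis UNIV Basis u w] by (simp add: span_Basis)
  then show ?thesis unfolding B_def .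
qed

lemma pluriharmonic_on_const:
  assumes "open U"
  shows "pluriharmonic_on U (\<lambda>z::complex^'n. c)"
proof -
  have D: "frechet_derivative (\<lambda>w. c) (at x) = (\<lambda>h. 0)"
    for c :: "'v::real_normed_vector" and x :: "complex^'n"
    by (rule frechet_derivative_at[symmetric, OF has_derivative_const])
  have "wirt_dzbar j (\<lambda>w::complex^'n. complex_of_real c) = (\<lambda>w. 0)" for j
    by (intro ext) (simp add: wirt_dzbar_def D)
  then show ?thesis
    using assms by (simp add: pluriharmonic_on_def C2_on_def levi_entry_def wirt_dz_def D)
qed

(* Q t is twice the Wirtinger derivative of t |-> g (t v), so the conclusion says that this
  restriction of g has vanishing Laplacian at s. *)
lemma pluriharmonic_on_line_dbar:
  fixes g :: "complex^'n \<Rightarrow> real"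
  assumes ph: "pluriharmonic_on U g" and S: "open S" "s \<in> S"
    and line: "\<And>t. t \<in> S \<Longrightarrow> t *s v \<in> U"
    and dg: "\<And>t. t \<in> S \<Longrightarrow> ((\<lambda>t. g (t *s v)) has_derivative (\<lambda>r. Re (r * Q t))) (at t)"
    and dQ: "(Q has_derivative DQ) (at s)"
  shows "Re (DQ 1 + \<i> * DQ \<i>) = 0"
proof -
  have C2: "C2_on U g"
    using ph unfolding pluriharmonic_on_def by blast
  have first: "frechet_derivative g (at (t *s v)) (r *s v) = Re (r * Q t)" if "t \<in> S" for t r
  proof -
    have "((\<lambda>t. g (t *s v)) has_derivative
        (\<lambda>r. frechet_derivative g (at (t *s v)) (r *s v))) (at t)"
      using has_derivative_compose[OF has_derivative_smult_vec
          C2_on_has_derivative[OF C2 line[OF that]]] .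
    from has_derivative_unique[OF this dg[OF that]] show ?thesis by meson
  qed
  have second: "second_derivative g (s *s v) (q *s v) (r *s v) = Re (r * DQ q)" for q r
  proof -
    have "((\<lambda>t. frechet_derivative g (at (t *s v)) (r *s v)) has_derivative
        (\<lambda>q. second_derivative g (s *s v) (q *s v) (r *s v))) (at s)"
      using has_derivative_compose[OF has_derivative_smult_vec
          C2_on_has_second_derivative[OF C2 line[OF S(2)]]] .
    moreover have "((\<lambda>t. frechet_derivative g (at (t *s v)) (r *s v)) has_derivative
        (\<lambda>q. Re (r * DQ q))) (at s)"
      by (rule has_derivative_transform_within_open[OF has_derivative_Re[OF
            has_derivative_mult_right[OF dQ]] S]) (simp add: first)
    ultimately have "(\<lambda>q. second_derivative g (s *s v) (q *s v) (r *s v)) = (\<lambda>q. Re (r * DQ q))"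
      by (rule has_derivative_unique)
    then show ?thesis by meson
  qed
  have "second_derivative g (s *s v) (1 *s v) (1 *s v)
      + second_derivative g (s *s v) (\<i> *s v) (\<i> *s v) = 0"
    using pluriharmonic_on_second_derivative_smult_i[OF ph line[OF S(2)]] by simp
  then show ?thesis
    unfolding second by simp
qed

section \<open>Entire functions of one variable\<close>

lemma wronskian_eq_0_imp_constant_ratio:
  fixes a h :: "complex \<Rightarrow> complex"
  assumes S: "open S" "connected S"
    and a: "\<And>t. t \<in> S \<Longrightarrow> (a has_field_derivative a' t) (at t)"
    and h: "\<And>t. t \<in> S \<Longrightarrow> (h has_field_derivative h' t) (at t)"
    and nz: "\<And>t. t \<in> S \<Longrightarrow> a t \<noteq> 0"
    and W: "\<And>t. t \<in> S \<Longrightarrow> a t * h' t = h t * a' t"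
  obtains c where "\<And>t. t \<in> S \<Longrightarrow> h t = c * a t"
proof -
  have R: "((\<lambda>t. h t / a t) has_field_derivative 0) (at t)" if "t \<in> S" for t
    using DERIV_quotient[OF h[OF that] a[OF that] nz[OF that]] W[OF that]
    by (simp add: mult.commute)
  then have "continuous_on S (\<lambda>t. h t / a t)"
    by (blast intro: continuous_at_imp_continuous_on DERIV_isCont)
  then obtain c where c: "\<And>t. t \<in> S \<Longrightarrow> h t / a t = c"
    using DERIV_zero_connected_constant[OF S(2,1) finite.emptyI] R by auto
  have "h t = c * a t" if "t \<in> S" for t
    using c[OF that] nz[OF that] by (simp add: divide_eq_eq mult.commute)
  then show ?thesis by (rule that)
qed

lemma has_field_derivative_nonzero_imp_isolated_zero:
  fixes a :: "complex \<Rightarrow> complex"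
  assumes "(a has_field_derivative \<alpha>) (at z)" and "a z = 0" and "\<alpha> \<noteq> 0"
  obtains d where "d > 0" and "\<And>t. t \<in> ball z d - {z} \<Longrightarrow> a t \<noteq> 0"
proof -
  have "((\<lambda>t. a t / (t - z)) \<longlongrightarrow> \<alpha>) (at z)"
    using assms(1,2) by (simp add: has_field_derivative_iff)
  then have "\<forall>\<^sub>F t in at z. a t / (t - z) \<noteq> 0"
    using assms(3) by (rule tendsto_imp_eventually_ne)
  then obtain d where "d > 0" and "\<And>t. t \<noteq> z \<Longrightarrow> dist t z < d \<Longrightarrow> a t \<noteq> 0"
    unfolding eventually_at by auto
  then show ?thesis
    using that by (auto simp: dist_commute)
qed

lemma wronskian_eq_0_imp_proportional:
  fixes a b :: "complex \<Rightarrow> complex"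
  assumes a: "\<And>t. (a has_field_derivative a' t) (at t)"
    and b: "\<And>t. (b has_field_derivative b' t) (at t)"
    and a0: "a 0 = 0" and a'0: "a' 0 \<noteq> 0"
    and W: "\<And>t. a t * b' t = b t * a' t"
  shows "b t * a' 0 = a t * b' 0"
proof -
  define h where "h t = b t * a' 0 - a t * b' 0" for t
  define h' where "h' t = b' t * a' 0 - a' t * b' 0" for t
  have hd: "(h has_field_derivative h' t) (at t)" for t
    unfolding h_def[abs_def] h'_def by (intro DERIV_diff DERIV_cmult_right a b)
  have Wh: "a t * h' t = h t * a' t" for t
  proof -
    have "a t * h' t - h t * a' t = a' 0 * (a t * b' t - b t * a' t)"
      by (simp add: h_def h'_def algebra_simps)
    then show ?thesis using W[of t] by simp
  qed
  obtain d where d: "d > 0" and nz: "\<And>t. t \<in> ball 0 d - {0} \<Longrightarrow> a t \<noteq> 0"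
    using has_field_derivative_nonzero_imp_isolated_zero[OF a a0 a'0] by blast
  define S where "S = ball (0::complex) d - {0}"
  have "open S" "connected S"
    unfolding S_def by (auto intro: connected_punctured_ball)
  moreover have "\<And>t. t \<in> S \<Longrightarrow> a t \<noteq> 0"
    using nz unfolding S_def .
  ultimately obtain c where hc: "\<And>t. t \<in> S \<Longrightarrow> h t = c * a t"
    using wronskian_eq_0_imp_constant_ratio[of S a a' h h'] a hd Wh by blast
  have lim: "0 islimpt S"
    unfolding S_def using d islimpt_punctured[of 0 "ball 0 d"] islimpt_ball[of 0 0 d]
    by (simp del: islimpt_ball) blast
  have "((\<lambda>t. h t - c * a t) has_field_derivative h' t - c * a' t) (at t)" for t
    by (intro DERIV_diff DERIV_cmult hd a)
  then have hol: "(\<lambda>t. h t - c * a t) holomorphic_on UNIV"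
    by (auto simp: holomorphic_on_open)
  have "h t - c * a t = 0" for t
    using analytic_continuation[OF hol open_UNIV connected_UNIV subset_UNIV UNIV_I lim] hc by simp
  then have "h = (\<lambda>t. c * a t)"
    by auto
  then have "(h has_field_derivative c * a' 0) (at 0)"
    using DERIV_cmult[OF a] by simp
  then have "h' 0 = c * a' 0"
    using DERIV_unique[OF hd] by blast
  then have "c = 0"
    using a'0 by (simp add: h'_def)
  then show ?thesis
    using \<open>h = (\<lambda>t. c * a t)\<close> by (simp add: h_def fun_eq_iff)
qed

lemma proper_injective_entire_affine:
  fixes f :: "complex \<Rightarrow> complex"
  assumes hol: "f holomorphic_on UNIV" and inj: "inj f"
    and proper: "\<And>K. compact K \<Longrightarrow> compact {z. f z \<in> K}"
  shows "f z = f 0 + deriv f 0 * z"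
proof -
  \<comment> \<open>A proper entire function is a polynomial; being injective it has no critical points,
    so by the fundamental theorem of algebra its derivative is constant.\<close>
  obtain c n where n: "0 < n" and cn: "c n \<noteq> 0" and f: "f = (\<lambda>z. \<Sum>i\<le>n. c i * z ^ i)"
    using proper_map_polyfun_eq[OF hol] proper by blast
  have "(f has_field_derivative (\<Sum>i\<le>n. of_nat i * z ^ (i - 1) * c i)) (at z)" for z
    unfolding f by (rule derivative_eq_intros refl | simp)+
  then have df: "deriv f z = (\<Sum>i\<le>n. of_nat i * z ^ (i - 1) * c i)" for z
    by (rule DERIV_imp_deriv)
  have n1: "n = 1"
  proof (rule ccontr)
    assume "n \<noteq> 1"
    with n obtain m where m: "n = Suc m" "1 \<le> m"
      by (cases n) auto
    define a where "a j = of_nat (Suc j) * c (Suc j)" for j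
    have "a m \<noteq> 0"
      using cn m(1) by (simp add: a_def del: of_nat_Suc)
    then have "\<exists>i\<in>{1..m}. a i \<noteq> 0"
      using m(2) by auto
    then obtain z where "(\<Sum>j\<le>m. a j * z ^ j) = 0"
      using fundamental_theorem_of_algebra[of a m] by blast
    moreover have "deriv f z = (\<Sum>j\<le>m. a j * z ^ j)"
      unfolding df m(1) sum.atMost_Suc_shift a_def by (simp add: mult_ac)
    moreover have "deriv f z \<noteq> 0"
      using holomorphic_injective_imp_regular[OF hol open_UNIV] inj by simp
    ultimately show False by simp
  qed
  show ?thesis
    using df[of 0] by (simp add: f n1)
qed

lemma holomorphic_curve_in_line:
  fixes \<gamma> \<gamma>' :: "complex \<Rightarrow> complex^'n"
  assumes \<gamma>: "\<And>t. (\<gamma> has_derivative (\<lambda>r. r *s \<gamma>' t)) (at t)"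
    and \<gamma>0: "\<gamma> 0 = 0" and \<gamma>'0: "\<gamma>' 0 = v" and v: "v \<noteq> 0"
    and parallel: "\<And>t k l. \<gamma> t $ k * \<gamma>' t $ l = \<gamma> t $ l * \<gamma>' t $ k"
  obtains f where "f holomorphic_on UNIV" "f 0 = 0" "deriv f 0 = 1" "\<And>t. \<gamma> t = f t *s v"
proof -
  obtain k where vk: "v $ k \<noteq> 0"
    using v by (auto simp: vec_eq_iff)
  have d: "((\<lambda>t. \<gamma> t $ l) has_field_derivative \<gamma>' t $ l) (at t)" for l t
    by (rule has_field_derivative_curve_nth[OF \<gamma>])
  have "\<gamma> t $ l * v $ k = \<gamma> t $ k * v $ l" for l t
    using wronskian_eq_0_imp_proportional[OF d d, of k l] \<gamma>0 \<gamma>'0 vk parallel by simp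
  then have "\<gamma> t = (\<gamma> t $ k / v $ k) *s v" for t
    using vk by (simp add: vec_eq_iff field_simps)
  moreover have df: "((\<lambda>t. \<gamma> t $ k / v $ k) has_field_derivative \<gamma>' t $ k / v $ k) (at t)" for t
    by (rule DERIV_cdivide[OF d])
  then have "(\<lambda>t. \<gamma> t $ k / v $ k) holomorphic_on UNIV"
    by (auto simp: holomorphic_on_open)
  moreover have "deriv (\<lambda>t. \<gamma> t $ k / v $ k) 0 = 1"
    using DERIV_imp_deriv[OF df[of 0]] \<gamma>'0 vk by simp
  ultimately show ?thesis
    using that \<gamma>0 by simp
qed

section \<open>Biholomorphic maps\<close>

lemma holomorphic_vec_on_UNIV_derivative:
  assumes "holomorphic_vec_on F UNIV"
  shows "(F has_derivative frechet_derivative F (at z)) (at z)"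
    and "complex_linear (frechet_derivative F (at z))"
proof -
  obtain L where L: "(F has_derivative L) (at z)" "complex_linear L"
    using assms unfolding holomorphic_vec_on_def by blast
  moreover have "L = frechet_derivative F (at z)"
    using L(1) by (rule frechet_derivative_at)
  ultimately show "(F has_derivative frechet_derivative F (at z)) (at z)"
    and "complex_linear (frechet_derivative F (at z))" by simp_all
qed

lemma complex_linear_compose:
  "complex_linear f \<Longrightarrow> complex_linear g \<Longrightarrow> complex_linear (g \<circ> f)"
  unfolding complex_linear_def by (simp add: linear_compose)

lemma complex_linear_inv:
  fixes L :: "complex^'n \<Rightarrow> complex^'n"
  assumes L: "complex_linear L" and "bij L"
  shows "complex_linear (inv L)"
proof -
  have lin: "linear L" and sc: "\<And>c x. L (c *s x) = c *s L x"
    using L unfolding complex_linear_def by auto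
  have "inv L (c *s y) = c *s inv L y" for c y
    using sc[of c "inv L y"] \<open>bij L\<close> by (metis bij_inv_eq_iff)
  moreover have "linear (inv L)"
    using inj_linear_imp_inv_bounded_linear[of L] lin bij_is_inj[OF \<open>bij L\<close>]
    by (simp add: linear_conv_bounded_linear)
  ultimately show ?thesis
    unfolding complex_linear_def by simp
qed

lemma holomorphic_vec_on_compose:
  assumes "holomorphic_vec_on f UNIV" "holomorphic_vec_on g UNIV"
  shows "holomorphic_vec_on (g \<circ> f) UNIV"
  unfolding holomorphic_vec_on_def
  using diff_chain_at[OF holomorphic_vec_on_UNIV_derivative(1)[OF assms(1)]
      holomorphic_vec_on_UNIV_derivative(1)[OF assms(2)]]
    complex_linear_compose[OF holomorphic_vec_on_UNIV_derivative(2)[OF assms(1)]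
      holomorphic_vec_on_UNIV_derivative(2)[OF assms(2)]]
  by blast

lemma holomorphic_vec_on_affine:
  assumes "complex_linear L"
  shows "holomorphic_vec_on (\<lambda>z. L z + c) UNIV"
proof -
  have "bounded_linear L"
    using assms by (simp add: complex_linear_def linear_conv_bounded_linear)
  then have "((\<lambda>z. L z + c) has_derivative L) (at z)" for z
    by (intro has_derivative_add_const bounded_linear_imp_has_derivative)
  then show ?thesis
    using assms unfolding holomorphic_vec_on_def by blast
qed

lemma biholomorphic_compose:
  assumes f: "biholomorphic f" and g: "biholomorphic g"
  shows "biholomorphic (g \<circ> f)"
proof -
  have "inv (g \<circ> f) = inv f \<circ> inv g"
    using f g by (simp add: biholomorphic_def o_inv_distrib)
  then show ?thesis
    using f g unfolding biholomorphic_def by (auto intro: bij_comp holomorphic_vec_on_compose)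
qed

lemma biholomorphic_affine:
  assumes L: "complex_linear L" and "bij L"
  shows "biholomorphic (\<lambda>z. L z + c)"
proof -
  have lin: "linear (inv L)"
    using complex_linear_inv[OF assms] by (simp add: complex_linear_def)
  have right: "(\<lambda>z. L z + c) \<circ> (\<lambda>w. inv L w + - inv L c) = id"
    using \<open>bij L\<close> L
    by (simp add: fun_eq_iff complex_linear_def linear_diff bij_is_surj surj_f_inv_f)
  have left: "(\<lambda>w. inv L w + - inv L c) \<circ> (\<lambda>z. L z + c) = id"
    using \<open>bij L\<close> lin by (auto simp: linear_add bij_is_inj)
  have inv: "inv (\<lambda>z. L z + c) = (\<lambda>w. inv L w + - inv L c)"
    by (rule inv_unique_comp[OF right left])
  have "bij (\<lambda>z. L z + c)"
    by (rule o_bij[OF left right])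
  then show ?thesis
    unfolding biholomorphic_def inv
    using holomorphic_vec_on_affine[OF L] holomorphic_vec_on_affine[OF complex_linear_inv[OF assms]]
    by blast
qed

lemma biholomorphic_derivative_bij:
  assumes F: "biholomorphic F"
  shows "bij (frechet_derivative F (at z))"
proof -
  have hF: "holomorphic_vec_on F UNIV" and hI: "holomorphic_vec_on (inv F) UNIV" and "inj F"
    using F by (auto simp: biholomorphic_def bij_is_inj)
  let ?DF = "frechet_derivative F (at z)" and ?DI = "frechet_derivative (inv F) (at (F z))"
  have "((inv F \<circ> F) has_derivative ?DI \<circ> ?DF) (at z)"
    by (rule diff_chain_at[OF holomorphic_vec_on_UNIV_derivative(1)[OF hF]
          holomorphic_vec_on_UNIV_derivative(1)[OF hI]])
  moreover have "((inv F \<circ> F) has_derivative id) (at z)"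
    using \<open>inj F\<close> by (simp add: has_derivative_id)
  ultimately have "?DI \<circ> ?DF = id"
    by (rule has_derivative_unique)
  then have "inj ?DF"
    by (metis inj_on_id inj_on_imageI2)
  moreover have "linear ?DF"
    using holomorphic_vec_on_UNIV_derivative(2)[OF hF] by (simp add: complex_linear_def)
  ultimately show ?thesis
    by (simp add: bij_def linear_inj_imp_surj)
qed

lemma biholomorphic_compact_vimage:
  assumes F: "biholomorphic F" and K: "compact K"
  shows "compact (F -` K)"
proof -
  have "continuous_on UNIV (inv F)"
    using F holomorphic_vec_on_UNIV_derivative(1) has_derivative_continuous
    by (metis biholomorphic_def continuous_at_imp_continuous_on)
  then have "compact (inv F ` K)"
    using K compact_continuous_image continuous_on_subset subset_UNIV by blast
  then show ?thesis
    using F by (simp add: biholomorphic_def bij_vimage_eq_inv_image)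
qed

lemma biholomorphic_normalize:
  fixes F :: "complex^'n \<Rightarrow> complex^'n"
  assumes F: "biholomorphic F"
  defines "L \<equiv> frechet_derivative F (at 0)"
  defines "G \<equiv> \<lambda>z. inv L (F z - F 0)"
  shows "biholomorphic G" and "G 0 = 0" and "frechet_derivative G (at 0) = id"
    and "(\<forall>z. F z = F 0 + L z) \<longleftrightarrow> (\<forall>z. G z = z)"
proof -
  have hF: "holomorphic_vec_on F UNIV"
    using F by (simp add: biholomorphic_def)
  have "bij L" and "complex_linear L"
    unfolding L_def
    by (rule biholomorphic_derivative_bij[OF F] holomorphic_vec_on_UNIV_derivative(2)[OF hF])+
  then have L': "complex_linear (inv L)" and "bij (inv L)"
    by (simp_all add: complex_linear_inv bij_imp_bij_inv)
  then have lin: "bounded_linear (inv L)"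
    by (simp add: complex_linear_def linear_conv_bounded_linear)
  have "G = (\<lambda>w. inv L w + - inv L (F 0)) \<circ> F"
    using lin by (simp add: G_def fun_eq_iff linear_diff bounded_linear.linear)
  then show "biholomorphic G"
    using biholomorphic_compose[OF F biholomorphic_affine[OF L' \<open>bij (inv L)\<close>, of "- inv L (F 0)"]]
    by simp
  show "G 0 = 0"
    using lin by (simp add: G_def linear_0 bounded_linear.linear)
  have "(F has_derivative L) (at 0)"
    unfolding L_def by (rule holomorphic_vec_on_UNIV_derivative(1)[OF hF])
  then have "(G has_derivative (\<lambda>x. inv L (L x - 0))) (at 0)"
    unfolding G_def
    by (intro bounded_linear.has_derivative[OF lin] has_derivative_diff has_derivative_const)
  moreover have "(\<lambda>x. inv L (L x - 0)) = id"
    using \<open>bij L\<close> by (simp add: fun_eq_iff bij_is_inj)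
  ultimately show "frechet_derivative G (at 0) = id"
    by (metis frechet_derivative_at)
  have "G z = z \<longleftrightarrow> L z = F z - F 0" for z
    unfolding G_def eq_commute[of "inv L (F z - F 0)" z] by (rule bij_inv_eq_iff[OF \<open>bij L\<close>])
  moreover have "L z = F z - F 0 \<longleftrightarrow> F z = F 0 + L z" for z
    by (auto simp: algebra_simps)
  ultimately show "(\<forall>z. F z = F 0 + L z) \<longleftrightarrow> (\<forall>z. G z = z)"
    by simp
qed

lemma holomorphic_vec_on_line:
  assumes "holomorphic_vec_on G UNIV"
  shows "((\<lambda>t. G (t *s v)) has_derivative (\<lambda>r. r *s frechet_derivative G (at (t *s v)) v)) (at t)"
  using has_derivative_compose[OF has_derivative_smult_vec
      holomorphic_vec_on_UNIV_derivative(1)[OF assms]]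
    holomorphic_vec_on_UNIV_derivative(2)[OF assms]
  by (simp add: complex_linear_def)

lemma has_derivative_ln_norm_ratio_line:
  fixes G :: "complex^'n \<Rightarrow> complex^'n"
  assumes \<gamma>: "\<And>t. ((\<lambda>t. G (t *s v)) has_derivative (\<lambda>r. r *s \<gamma>' t)) (at t)"
    and nz: "\<And>t. t \<noteq> 0 \<Longrightarrow> G (t *s v) \<noteq> 0" and v: "v \<noteq> 0" and s: "s \<noteq> 0"
  shows "((\<lambda>t. ln (norm (G (t *s v)) / norm (t *s v))) has_derivative
    (\<lambda>r. Re (r * (cinner (\<gamma>' s) (G (s *s v)) / cinner (G (s *s v)) (G (s *s v))
      - cinner v (s *s v) / cinner (s *s v) (s *s v))))) (at s)"
proof (rule has_derivative_transform_within_open[OF _ open_delete[OF open_UNIV]])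
  have line: "t *s v \<noteq> 0" if "t \<noteq> 0" for t
    using that v by (simp add: vec_eq_iff)
  show "((\<lambda>t. ln (norm (G (t *s v))) - ln (norm (t *s v))) has_derivative
    (\<lambda>r. Re (r * (cinner (\<gamma>' s) (G (s *s v)) / cinner (G (s *s v)) (G (s *s v))
      - cinner v (s *s v) / cinner (s *s v) (s *s v))))) (at s)"
    using has_derivative_diff[OF has_derivative_ln_norm_curve[OF \<gamma> nz[OF s]]
        has_derivative_ln_norm_curve[OF has_derivative_smult_vec line[OF s]]]
    by (simp add: right_diff_distrib)
  show "ln (norm (G (t *s v))) - ln (norm (t *s v)) = ln (norm (G (t *s v)) / norm (t *s v))"
    if "t \<in> UNIV - {0}" for t
    using that nz line by (simp add: ln_div)
qed (use s in simp)

lemma pluriharmonic_log_norm_ratio_cauchy_schwarz_eq: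
  fixes G :: "complex^'n \<Rightarrow> complex^'n"
  assumes ph: "pluriharmonic_on (UNIV - {0}) (\<lambda>z. ln (norm (G z) / norm z))"
    and \<gamma>: "\<And>t. ((\<lambda>t. G (t *s v)) has_derivative (\<lambda>r. r *s \<gamma>' t)) (at t)"
    and \<gamma>': "\<And>t. (\<gamma>' has_derivative (\<lambda>r. r *s \<gamma>'' t)) (at t)"
    and nz: "\<And>t. t \<noteq> 0 \<Longrightarrow> G (t *s v) \<noteq> 0" and v: "v \<noteq> 0" and s: "s \<noteq> 0"
  shows "cinner (G (s *s v)) (G (s *s v)) * cinner (\<gamma>' s) (\<gamma>' s)
       = cinner (\<gamma>' s) (G (s *s v)) * cinner (G (s *s v)) (\<gamma>' s)"
proof -
  have line: "t *s v \<noteq> 0" if "t \<noteq> 0" for t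
    using that v by (simp add: vec_eq_iff)
  obtain DQ where DQ: "((\<lambda>t. cinner (\<gamma>' t) (G (t *s v)) / cinner (G (t *s v)) (G (t *s v)))
      has_derivative DQ) (at s)"
    and dbar: "DQ 1 + \<i> * DQ \<i> = 2 * (cinner (\<gamma>' s) (\<gamma>' s) * cinner (G (s *s v)) (G (s *s v))
        - cinner (\<gamma>' s) (G (s *s v)) * cinner (G (s *s v)) (\<gamma>' s))
        / (cinner (G (s *s v)) (G (s *s v)))\<^sup>2"
    using log_derivative_curve_dbar[where \<gamma>="\<lambda>t. G (t *s v)" and \<gamma>'=\<gamma>' and \<gamma>''=\<gamma>''
        and t=s, OF \<gamma> \<gamma>' nz[OF s]]
    by blast
  have const: "((\<lambda>t. v) has_derivative (\<lambda>r. r *s (0::complex^'n))) (at s)"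
    by simp
  obtain DQ0
    where DQ0: "((\<lambda>t. cinner v (t *s v) / cinner (t *s v) (t *s v)) has_derivative DQ0) (at s)"
    and dbar0: "DQ0 1 + \<i> * DQ0 \<i> = 2 * (cinner v v * cinner (s *s v) (s *s v)
        - cinner v (s *s v) * cinner (s *s v) v) / (cinner (s *s v) (s *s v))\<^sup>2"
    using log_derivative_curve_dbar[where \<gamma>="\<lambda>t. t *s v" and \<gamma>'="\<lambda>t. v" and \<gamma>''="\<lambda>t. 0"
        and t=s, OF has_derivative_smult_vec const line[OF s]]
    by blast
  have "Re ((DQ 1 - DQ0 1) + \<i> * (DQ \<i> - DQ0 \<i>)) = 0"
    using pluriharmonic_on_line_dbar[OF ph open_delete[OF open_UNIV] _ _
        has_derivative_ln_norm_ratio_line[OF \<gamma> nz v] has_derivative_diff[OF DQ DQ0]] line s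
    by simp
  moreover have "DQ0 1 + \<i> * DQ0 \<i> = 0"
    unfolding dbar0 by (simp add: cinner_smult_left cinner_smult_right)
  ultimately have "Re (DQ 1 + \<i> * DQ \<i>) = 0"
    by (simp add: algebra_simps)
  then have "(norm (\<gamma>' s))\<^sup>2 * (norm (G (s *s v)))\<^sup>2 - (cmod (cinner (\<gamma>' s) (G (s *s v))))\<^sup>2 = 0"
    using nz[OF s] unfolding dbar cinner_cauchy_schwarz_defect_real by (simp add: cinner_self)
  then show ?thesis
    using cinner_cauchy_schwarz_defect_real[of "\<gamma>' s" "G (s *s v)"] by (simp add: mult.commute)
qed

lemma biholomorphic_line_self_map_inj_proper:
  fixes G :: "complex^'n \<Rightarrow> complex^'n"
  assumes G: "biholomorphic G" and v: "v \<noteq> 0" and f: "\<And>t. G (t *s v) = f t *s v"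
  shows "inj f" and "\<And>K. compact K \<Longrightarrow> compact {t. f t \<in> K}"
proof -
  have scale_eq: "a *s v = b *s v \<longleftrightarrow> a = b" for a b
    using v by (auto simp: vec_eq_iff)
  show "inj f"
    using G f scale_eq unfolding biholomorphic_def by (metis bij_is_inj injD injI)
  fix K :: "complex set"
  assume "compact K"
  then have "compact (G -` ((\<lambda>c. c *s v) ` K))"
    by (intro biholomorphic_compact_vimage[OF G] compact_continuous_image
        linear_continuous_on bounded_linear_smult_vec)
  moreover have "{t. f t \<in> K} = {t. t *s v \<in> G -` ((\<lambda>c. c *s v) ` K)}"
    using f scale_eq by auto
  ultimately show "compact {t. f t \<in> K}"
    using compact_vimage_smult_vec[of "G -` ((\<lambda>c. c *s v) ` K)" v] v by simp
qed

lemma pluriharmonic_log_norm_ratio_imp_eq_id: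
  fixes G :: "complex^'n \<Rightarrow> complex^'n"
  assumes G: "biholomorphic G" and G0: "G 0 = 0" and DG0: "frechet_derivative G (at 0) = id"
    and ph: "pluriharmonic_on (UNIV - {0}) (\<lambda>z. ln (norm (G z) / norm z))"
  shows "G v = v"
proof (cases "v = 0")
  case True
  then show ?thesis using G0 by simp
next
  case v: False
  have hol: "holomorphic_vec_on G UNIV" and "inj G"
    using G by (auto simp: biholomorphic_def bij_is_inj)
  define \<gamma>' where "\<gamma>' t = frechet_derivative G (at (t *s v)) v" for t
  have \<gamma>: "((\<lambda>t. G (t *s v)) has_derivative (\<lambda>r. r *s \<gamma>' t)) (at t)" for t
    unfolding \<gamma>'_def by (rule holomorphic_vec_on_line[OF hol])
  obtain \<gamma>'' where \<gamma>': "\<And>t. (\<gamma>' has_derivative (\<lambda>r. r *s \<gamma>'' t)) (at t)"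
    using holomorphic_curve_derivative[OF \<gamma>] by blast
  have nz: "G (t *s v) \<noteq> 0" if "t \<noteq> 0" for t
    using that v G0 \<open>inj G\<close>
    by (metis injD vec_eq_iff vector_smult_component mult_eq_0_iff zero_index)
  have parallel: "G (t *s v) $ k * \<gamma>' t $ l = G (t *s v) $ l * \<gamma>' t $ k" for t k l
  proof (cases "t = 0")
    case False
    then show ?thesis
      using cinner_cauchy_schwarz_eq_imp_parallel
        pluriharmonic_log_norm_ratio_cauchy_schwarz_eq[OF ph \<gamma> \<gamma>' nz v False] by blast
  qed (simp add: G0)
  moreover have "G (0 *s v) = 0" and "\<gamma>' 0 = v"
    by (simp_all add: G0 \<gamma>'_def DG0)
  ultimately obtain f where hf: "f holomorphic_on UNIV" and f0: "f 0 = 0" and df0: "deriv f 0 = 1"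
    and f: "\<And>t. G (t *s v) = f t *s v"
    using holomorphic_curve_in_line[OF \<gamma> _ _ v] by blast
  have "f 1 = 1"
    using proper_injective_entire_affine[OF hf biholomorphic_line_self_map_inj_proper[OF G v f]]
      f0 df0 by simp
  then show ?thesis
    using f[of 1] by simp
qed

theorem corollary1:
  fixes F :: "complex^'n \<Rightarrow> complex^'n"
  assumes "biholomorphic F"
  shows "(\<forall>z. F z = F 0 + frechet_derivative F (at 0) z) \<longleftrightarrow>
         pluriharmonic_on (UNIV - {0})
           (\<lambda>z. ln (norm (inv (frechet_derivative F (at 0)) (F z - F 0)) / norm z))"
proof -
  define G where "G z = inv (frechet_derivative F (at 0)) (F z - F 0)" for z
  have G: "biholomorphic G" "G 0 = 0" "frechet_derivative G (at 0) = id"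
    and affine_iff: "(\<forall>z. F z = F 0 + frechet_derivative F (at 0) z) \<longleftrightarrow> (\<forall>z. G z = z)"
    using biholomorphic_normalize[OF assms] unfolding G_def[abs_def] by blast+
  show ?thesis
    unfolding affine_iff G_def[symmetric]
  proof
    assume "\<forall>z. G z = z"
    then have "(\<lambda>z. ln (norm (G z) / norm z)) = (\<lambda>z. 0)"
      by (simp add: fun_eq_iff)
    then show "pluriharmonic_on (UNIV - {0}) (\<lambda>z. ln (norm (G z) / norm z))"
      using pluriharmonic_on_const[of "UNIV - {0}" 0] by (simp add: open_delete)
  next
    assume "pluriharmonic_on (UNIV - {0}) (\<lambda>z. ln (norm (G z) / norm z))"
    then show "\<forall>z. G z = z"
      using pluriharmonic_log_norm_ratio_imp_eq_id[OF G] by blast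
  qed
qed

end
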